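(* Let $G$ be a countable group with a right-invariant metric $d$ whose integer balls $B_k=\{g:d(g,e)\le k\}$ are finite, and suppose $(G,d)$ has the Besicovitch covering property with constant $C$. For $a\in\ell^1(G)$ and $k\in\mathbb{N}$ let $s_ka(h)=\sum_{g\in B_k}a(gh)$. Let $k\in\mathbb{N}$, $\epsilon>0$, $a,b\in\ell^1(G)$ with $b\ge0$, and set $H=\bigcup_{i=1}^kH^{(i)}$ where $H^{(i)}=\{h\in G:s_ia(h)>\epsilon\,s_ib(h)\}$. Then $\|a\|_1\ge\epsilon C^{-1}\sum_{h\in H}b(h)$.
   Context: Besicovitch covering property with constant $C$: for every finite $E$ and every collection $\mathcal{U}=\{B_{r(x)}(x):x\in E\}$ of closed balls centred in $E$ there is $\mathcal{V}\subseteq\mathcal{U}$ with $\mathbf{1}_E\le\sum_{U\in\mathcal{V}}\mathbf{1}_U\le C$. *)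

theory Defs
  imports "HOL-Analysis.Analysis" "HOL-Library.Countable"
begin

text \<open>Right-invariance of a metric on a group written additively: d(xg, yg) = d(x,y).\<close>
definition right_invariant :: "('a::group_add \<Rightarrow> 'a \<Rightarrow> real) \<Rightarrow> bool" where
  "right_invariant d \<longleftrightarrow> (\<forall>x y g. d (x + g) (y + g) = d x y)"

definition ballB :: "('a::group_add \<Rightarrow> 'a \<Rightarrow> real) \<Rightarrow> nat \<Rightarrow> 'a set" where
  "ballB d k = {g. d g 0 \<le> real k}"

definition besicovitch :: "('a \<Rightarrow> 'a \<Rightarrow> real) \<Rightarrow> real \<Rightarrow> bool" where
  "besicovitch d C \<longleftrightarrow>
     (\<forall>E r. finite E \<longrightarrow> (\<forall>x\<in>E. 0 < r x) \<longrightarrow>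
        (\<exists>V \<subseteq> (\<lambda>x. Metric_space.mcball UNIV d x (r x)) ` E.
           \<forall>y. (indicator E y :: real) \<le> (\<Sum>U\<in>V. indicator U y) \<and> (\<Sum>U\<in>V. indicator U y) \<le> C))"

definition sk :: "('a::group_add \<Rightarrow> 'a \<Rightarrow> real) \<Rightarrow> nat \<Rightarrow> ('a \<Rightarrow> real) \<Rightarrow> 'a \<Rightarrow> real" where
  "sk d k a h = (\<Sum>g\<in>ballB d k. a (g + h))"

end

theory Submission
  imports Defs
begin

text \<open>
  For every h in H pick a radius i with s_i a(h) > \<epsilon> s_i b(h); by right-invariance s_i a(h) is
  the sum of a over the closed ball of radius i around h. The Besicovitch property selects from
  these balls a subfamily V covering a given finite part F of H with multiplicity at most C, so
  double counting gives  \<epsilon> b(F) \<le> \<Sum>(U\<in>V) \<epsilon> b(U) \<le> \<Sum>(U\<in>V) |a|(U) \<le> C \<parallel>a\<parallel>_1.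
  Exhausting H by finite sets finishes the proof.
\<close>

lemma mcball_eq_translate_ballB:
  fixes d :: "'a::group_add \<Rightarrow> 'a \<Rightarrow> real"
  assumes "Metric_space UNIV d" "right_invariant d"
  shows "Metric_space.mcball UNIV d h (real i) = (\<lambda>g. g + h) ` ballB d i"
proof -
  have dist_translate: "d h y = d (y - h) 0" for y
  proof -
    have "d h y = d y h" using Metric_space.commute[OF assms(1)] by blast
    also have "\<dots> = d (y - h + h) (0 + h)" by simp
    also have "\<dots> = d (y - h) 0" using assms(2) unfolding right_invariant_def by blast
    finally show ?thesis .
  qed
  show ?thesis
    unfolding Metric_space.mcball_def[OF assms(1)] ballB_def dist_translate
    by (auto simp: image_iff intro!: exI[of _ "_ - h"])
qed

lemma finite_mcball_nat:
  fixes d :: "'a::group_add \<Rightarrow> 'a \<Rightarrow> real"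
  assumes "Metric_space UNIV d" "right_invariant d" "finite (ballB d i)"
  shows "finite (Metric_space.mcball UNIV d h (real i))"
  using assms by (simp add: mcball_eq_translate_ballB)

lemma sum_mcball_eq_sk:
  fixes d :: "'a::group_add \<Rightarrow> 'a \<Rightarrow> real"
  assumes "Metric_space UNIV d" "right_invariant d"
  shows "sum f (Metric_space.mcball UNIV d h (real i)) = sk d i f h"
proof -
  have "inj_on (\<lambda>g. g + h) (ballB d i)" by (auto simp: inj_on_def)
  then show ?thesis
    unfolding mcball_eq_translate_ballB[OF assms] sk_def by (simp add: sum.reindex o_def)
qed

lemma besicovitch_const_ge_1:
  fixes d :: "'a \<Rightarrow> 'a \<Rightarrow> real"
  assumes "besicovitch d C"
  shows "C \<ge> 1"
proof -
  fix x :: 'a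
  obtain V where "\<forall>y. (indicator {x} y :: real) \<le> (\<Sum>U\<in>V. indicator U y) \<and> (\<Sum>U\<in>V. indicator U y) \<le> C"
    using assms[unfolded besicovitch_def, rule_format, of "{x}" "\<lambda>_. 1"] by auto
  from this[rule_format, of x] show ?thesis by simp
qed

lemma sum_sum_eq_sum_multiplicity:
  fixes f :: "'a \<Rightarrow> 'b::comm_ring_1"
  assumes "finite V" "\<forall>U\<in>V. finite U"
  shows "(\<Sum>U\<in>V. sum f U) = (\<Sum>y\<in>\<Union>V. f y * (\<Sum>U\<in>V. indicator U y))"
proof -
  have "(\<Sum>U\<in>V. sum f U) = (\<Sum>U\<in>V. \<Sum>y\<in>\<Union>V. f y * indicator U y)"
  proof (rule sum.cong[OF refl])
    fix U assume "U \<in> V"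
    then show "sum f U = (\<Sum>y\<in>\<Union>V. f y * indicator U y)"
      using assms by (intro sum.mono_neutral_cong_left) (auto simp: indicator_def)
  qed
  also have "\<dots> = (\<Sum>y\<in>\<Union>V. f y * (\<Sum>U\<in>V. indicator U y))"
    by (simp add: sum_distrib_left sum.swap[of _ "\<Union>V" V])
  finally show ?thesis .
qed

lemma sum_le_sum_over_cover:
  fixes f :: "'a \<Rightarrow> 'b::linordered_idom"
  assumes "finite V" "\<forall>U\<in>V. finite U" "\<And>y. f y \<ge> 0"
    and cover: "\<And>y. (indicator F y :: 'b) \<le> (\<Sum>U\<in>V. indicator U y)"
  shows "sum f F \<le> (\<Sum>U\<in>V. sum f U)"
proof -
  let ?mult = "\<lambda>y. (\<Sum>U\<in>V. indicator U y) :: 'b"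
  have F_sub: "F \<subseteq> \<Union>V"
  proof
    fix y assume "y \<in> F"
    then have "?mult y \<noteq> 0" using cover[of y] by auto
    show "y \<in> \<Union>V"
    proof (rule ccontr)
      assume "y \<notin> \<Union>V"
      then have "?mult y = 0" by (intro sum.neutral) auto
      with \<open>?mult y \<noteq> 0\<close> show False by simp
    qed
  qed
  have "f y \<le> f y * ?mult y" if "y \<in> F" for y
    using cover[of y] that assms(3)[of y] by (simp add: mult_le_cancel_left1)
  then have "sum f F \<le> (\<Sum>y\<in>F. f y * ?mult y)" by (rule sum_mono)
  also have "\<dots> \<le> (\<Sum>y\<in>\<Union>V. f y * ?mult y)"
    using assms F_sub by (intro sum_mono2) (auto intro!: sum_nonneg mult_nonneg_nonneg)
  finally show ?thesis by (simp add: sum_sum_eq_sum_multiplicity[OF assms(1,2)])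
qed

lemma sum_over_bounded_cover_le:
  fixes f :: "'a \<Rightarrow> 'b::linordered_idom"
  assumes "finite V" "\<forall>U\<in>V. finite U" "\<And>y. f y \<ge> 0"
    and bounded: "\<And>y. (\<Sum>U\<in>V. indicator U y) \<le> C"
  shows "(\<Sum>U\<in>V. sum f U) \<le> C * sum f (\<Union>V)"
proof -
  have "f y * (\<Sum>U\<in>V. indicator U y) \<le> C * f y" for y
    using mult_left_mono[OF bounded assms(3)] by (simp add: mult.commute)
  then show ?thesis
    unfolding sum_sum_eq_sum_multiplicity[OF assms(1,2)] sum_distrib_left by (rule sum_mono)
qed

lemma finite_maximal_inequality:
  fixes d :: "'a::group_add \<Rightarrow> 'a \<Rightarrow> real"
  assumes "Metric_space UNIV d" "right_invariant d" "\<And>n. finite (ballB d n)"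
    and "besicovitch d C" "\<epsilon> > 0"
    and "(\<lambda>g. \<bar>a g\<bar>) summable_on UNIV" "\<And>g. b g \<ge> 0"
    and "finite F" and large: "\<forall>h\<in>F. \<exists>i\<ge>1. sk d i a h > \<epsilon> * sk d i b h"
  shows "\<epsilon> * sum b F \<le> C * (\<Sum>\<^sub>\<infinity>g. \<bar>a g\<bar>)"
proof -
  let ?B = "Metric_space.mcball UNIV d"
  obtain i where i: "\<forall>h\<in>F. 1 \<le> i h \<and> sk d (i h) a h > \<epsilon> * sk d (i h) b h"
    using bchoice[OF large] by blast
  then have "\<forall>h\<in>F. 0 < real (i h)" by auto
  then have "\<exists>V \<subseteq> (\<lambda>h. ?B h (real (i h))) ` F. \<forall>y.
      (indicator F y :: real) \<le> (\<Sum>U\<in>V. indicator U y) \<and> (\<Sum>U\<in>V. indicator U y) \<le> C"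
    using assms(4,8) unfolding besicovitch_def by simp
  then obtain V where V: "V \<subseteq> (\<lambda>h. ?B h (real (i h))) ` F"
    and cover: "\<And>y. (indicator F y :: real) \<le> (\<Sum>U\<in>V. indicator U y)"
    and bounded: "\<And>y. (\<Sum>U\<in>V. indicator U y) \<le> C"
    by blast
  have "finite V" using assms(8) by (rule finite_subset[OF V finite_imageI])
  moreover have fin_members: "\<forall>U\<in>V. finite U"
    using V by (auto intro: finite_mcball_nat[OF assms(1,2,3)])
  ultimately have fin_union: "finite (\<Union>V)" by blast
  have "sum b F \<le> (\<Sum>U\<in>V. sum b U)"
    using \<open>finite V\<close> fin_members assms(7) cover by (rule sum_le_sum_over_cover)
  then have "\<epsilon> * sum b F \<le> (\<Sum>U\<in>V. \<epsilon> * sum b U)"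
    using assms(5) by (simp add: sum_distrib_left[symmetric])
  also have "\<dots> \<le> (\<Sum>U\<in>V. sum (\<lambda>y. \<bar>a y\<bar>) U)"
  proof (rule sum_mono)
    fix U assume "U \<in> V"
    then obtain h where "h \<in> F" "U = ?B h (real (i h))" using V by auto
    then have "\<epsilon> * sum b U < sum a U"
      using i sum_mcball_eq_sk[OF assms(1,2)] by simp
    moreover have "sum a U \<le> sum (\<lambda>y. \<bar>a y\<bar>) U" by (rule sum_mono) simp
    ultimately show "\<epsilon> * sum b U \<le> sum (\<lambda>y. \<bar>a y\<bar>) U" by linarith
  qed
  also have "\<dots> \<le> C * sum (\<lambda>y. \<bar>a y\<bar>) (\<Union>V)"
    by (rule sum_over_bounded_cover_le[OF \<open>finite V\<close> fin_members _ bounded]) simp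
  also have "\<dots> \<le> C * (\<Sum>\<^sub>\<infinity>g. \<bar>a g\<bar>)"
    using besicovitch_const_ge_1[OF assms(4)]
    by (intro mult_left_mono finite_sum_le_infsum[OF assms(6) fin_union]) auto
  finally show ?thesis .
qed

theorem lemma6:
  fixes d :: "'a::{group_add,countable} \<Rightarrow> 'a \<Rightarrow> real"
    and C \<epsilon> :: real and k :: nat and a b :: "'a \<Rightarrow> real"
  assumes "Metric_space UNIV d"
    and "right_invariant d"
    and "\<And>n. finite (ballB d n)"
    and "besicovitch d C"
    and "\<epsilon> > 0"
    and "(\<lambda>g. \<bar>a g\<bar>) summable_on UNIV"
    and "(\<lambda>g. \<bar>b g\<bar>) summable_on UNIV"
    and "\<And>g. b g \<ge> 0"
  shows "(\<Sum>\<^sub>\<infinity>g. \<bar>a g\<bar>) \<ge>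
           \<epsilon> * inverse C *
           infsum b (\<Union>i\<in>{1..k}. {h. sk d i a h > \<epsilon> * sk d i b h})"
proof -
  define H where "H = (\<Union>i\<in>{1..k}. {h. sk d i a h > \<epsilon> * sk d i b h})"
  have "\<forall>h\<in>H. \<exists>i\<ge>1. sk d i a h > \<epsilon> * sk d i b h" by (auto simp: H_def)
  then have "\<epsilon> * sum b F \<le> C * (\<Sum>\<^sub>\<infinity>g. \<bar>a g\<bar>)" if "finite F" "F \<subseteq> H" for F
    using that by (intro finite_maximal_inequality[OF assms(1-6,8)]) auto
  moreover have "b summable_on H"
    using summable_on_subset[OF assms(7)] assms(8) by (simp add: abs_of_nonneg)
  ultimately have "infsum b H \<le> C * (\<Sum>\<^sub>\<infinity>g. \<bar>a g\<bar>) / \<epsilon>"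
    using assms(5) by (intro infsum_le_finite_sums) (auto simp: field_simps)
  then show ?thesis
    using assms(5) besicovitch_const_ge_1[OF assms(4)] by (simp add: H_def field_simps)
qed

end
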